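(* Let $\lambda \in \mathbb{R}$ and let $f \in C^4(\mathbb{R})$ be a real-valued solution, $f \not\equiv 0$, of the ODE $$-\lambda f' = -f^{(4)} + f(1-f), \qquad y \in \mathbb{R},$$ satisfying the boundary conditions $f(y) \to 1$ as $y \to -\infty$ and $f(y) \to 0$ as $y \to +\infty$, where the convergence is exponentially fast together with the derivatives, i.e. $f-1, f', f'', f'''$ tend to $0$ exponentially fast as $y \to -\infty$, and $f, f', f'', f'''$ tend to $0$ exponentially fast as $y \to +\infty$. Then $\lambda > 0$.
   Context: This is the ordinary differential equation for travelling-wave profiles $u(x,t) = f(x - \lambda t)$ of the fourth-order semilinear parabolic equation $u_t = -u_{xxxx} + u(1-u)$ on $\mathbb{R} \times \mathbb{R}_+$; $\lambda$ is the wave speed. *)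

theory Defs
  imports "HOL-Analysis.Analysis"
begin

definition exp_decay_at_top :: "(real \<Rightarrow> real) \<Rightarrow> bool" where
  "exp_decay_at_top g \<longleftrightarrow>
     (\<exists>C a. a > 0 \<and> (\<forall>\<^sub>F y in at_top. \<bar>g y\<bar> \<le> C * exp (- a * y)))"

definition exp_decay_at_bot :: "(real \<Rightarrow> real) \<Rightarrow> bool" where
  "exp_decay_at_bot g \<longleftrightarrow>
     (\<exists>C a. a > 0 \<and> (\<forall>\<^sub>F y in at_bot. \<bar>g y\<bar> \<le> C * exp (a * y)))"

end

theory Submission
  imports Defs
begin

text \<open>Multiplying the equation \<open>f\<^sup>(\<^sup>4\<^sup>) = \<lambda> f' + f(1 - f)\<close> by \<open>f'\<close> shows that the energy
  \<open>E = f''' f' - f''\<^sup>2/2 - (f\<^sup>2/2 - f\<^sup>3/3)\<close> satisfies \<open>E' = \<lambda> f'\<^sup>2\<close>. The boundary conditions give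
  \<open>E(-\<infinity>) = -1/6\<close> and \<open>E(+\<infinity>) = 0\<close>, so \<open>E\<close> must increase somewhere, forcing \<open>\<lambda> > 0\<close>.\<close>

lemma exp_decay_at_top_imp_tendsto_zero:
  assumes "exp_decay_at_top g"
  shows "(g \<longlongrightarrow> 0) at_top"
proof -
  from assms obtain C a where "a > 0" and bound: "\<forall>\<^sub>F y in at_top. \<bar>g y\<bar> \<le> C * exp (- a * y)"
    unfolding exp_decay_at_top_def by blast
  then have "LIM y at_top. - a * y :> at_bot"
    by (intro filterlim_tendsto_neg_mult_at_bot[OF tendsto_const] filterlim_ident) auto
  then have "((\<lambda>y. C * exp (- a * y)) \<longlongrightarrow> 0) at_top"
    by (intro tendsto_mult_right_zero filterlim_compose[OF exp_at_bot])
  then show ?thesis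
    by (rule Lim_null_comparison[rotated]) (use bound in simp)
qed

lemma exp_decay_at_bot_imp_tendsto_zero:
  assumes "exp_decay_at_bot g"
  shows "(g \<longlongrightarrow> 0) at_bot"
proof -
  from assms obtain C a where "a > 0" and bound: "\<forall>\<^sub>F y in at_bot. \<bar>g y\<bar> \<le> C * exp (a * y)"
    unfolding exp_decay_at_bot_def by blast
  then have "LIM y at_bot. a * y :> at_bot"
    by (intro filterlim_tendsto_pos_mult_at_bot[OF tendsto_const] filterlim_ident) auto
  then have "((\<lambda>y. C * exp (a * y)) \<longlongrightarrow> 0) at_bot"
    by (intro tendsto_mult_right_zero filterlim_compose[OF exp_at_bot])
  then show ?thesis
    by (rule Lim_null_comparison[rotated]) (use bound in simp)
qed

lemma antimono_limit_at_top_le_limit_at_bot: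
  fixes H :: "real \<Rightarrow> real"
  assumes "antimono H" and bot: "(H \<longlongrightarrow> a) at_bot" and top: "(H \<longlongrightarrow> b) at_top"
  shows "b \<le> a"
proof -
  have "b \<le> H y" for y
  proof (rule tendsto_le[OF _ tendsto_const top])
    show "\<forall>\<^sub>F x in at_top. H x \<le> H y"
      using eventually_ge_at_top[of y] by eventually_elim (use \<open>antimono H\<close> in \<open>auto dest: antimonoD\<close>)
  qed simp
  then show ?thesis
    by (intro tendsto_le[OF _ bot tendsto_const]) (simp_all add: always_eventually)
qed

definition wave_energy :: "(real \<Rightarrow> real) \<Rightarrow> (real \<Rightarrow> real) \<Rightarrow> (real \<Rightarrow> real) \<Rightarrow> (real \<Rightarrow> real) \<Rightarrow> real \<Rightarrow> real"
  where "wave_energy f f1 f2 f3 y = f3 y * f1 y - f2 y ^ 2 / 2 - (f y ^ 2 / 2 - f y ^ 3 / 3)"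

lemma wave_energy_has_derivative:
  assumes "\<And>y. (f has_real_derivative f1 y) (at y)"
      and "\<And>y. (f1 has_real_derivative f2 y) (at y)"
      and "\<And>y. (f2 has_real_derivative f3 y) (at y)"
      and "\<And>y. (f3 has_real_derivative f4 y) (at y)"
      and ode: "f4 y = lam * f1 y + f y * (1 - f y)"
  shows "(wave_energy f f1 f2 f3 has_real_derivative lam * f1 y ^ 2) (at y)"
  unfolding wave_energy_def[abs_def]
  by (rule derivative_eq_intros assms refl
      | simp add: ode power2_eq_square power3_eq_cube algebra_simps)+

lemma wave_energy_tendsto:
  assumes "(f \<longlongrightarrow> c) F" "(f1 \<longlongrightarrow> 0) F" "(f2 \<longlongrightarrow> 0) F" "(f3 \<longlongrightarrow> 0) F"
  shows "(wave_energy f f1 f2 f3 \<longlongrightarrow> - (c ^ 2 / 2 - c ^ 3 / 3)) F"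
proof -
  have "((\<lambda>y. f3 y * f1 y - f2 y ^ 2 / 2 - (f y ^ 2 / 2 - f y ^ 3 / 3))
      \<longlongrightarrow> 0 * 0 - 0 ^ 2 / 2 - (c ^ 2 / 2 - c ^ 3 / 3)) F"
    by (intro tendsto_intros assms) simp_all
  then show ?thesis
    by (simp add: wave_energy_def[abs_def])
qed

theorem proposition2p1:
  fixes lam :: real and f f1 f2 f3 f4 :: "real \<Rightarrow> real"
  assumes d1: "\<And>y. (f has_real_derivative f1 y) (at y)"
      and d2: "\<And>y. (f1 has_real_derivative f2 y) (at y)"
      and d3: "\<And>y. (f2 has_real_derivative f3 y) (at y)"
      and d4: "\<And>y. (f3 has_real_derivative f4 y) (at y)"
      and c4: "continuous_on UNIV f4"
      and ode: "\<And>y. - lam * f1 y = - f4 y + f y * (1 - f y)"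
      and nz: "\<exists>y. f y \<noteq> 0"
      and bot0: "exp_decay_at_bot (\<lambda>y. f y - 1)"
      and bot1: "exp_decay_at_bot f1"
      and bot2: "exp_decay_at_bot f2"
      and bot3: "exp_decay_at_bot f3"
      and top0: "exp_decay_at_top f"
      and top1: "exp_decay_at_top f1"
      and top2: "exp_decay_at_top f2"
      and top3: "exp_decay_at_top f3"
  shows "lam > 0"
proof (rule ccontr)
  assume "\<not> lam > 0"
  let ?E = "wave_energy f f1 f2 f3"
  have E_antimono: "antimono ?E"
  proof (rule antimonoI)
    fix x y :: real
    assume "x \<le> y"
    then show "?E y \<le> ?E x"
    proof (rule DERIV_nonpos_imp_nonincreasing)
      fix z
      have "(?E has_real_derivative lam * f1 z ^ 2) (at z)"
        using ode by (intro wave_energy_has_derivative[OF d1 d2 d3 d4]) (simp add: algebra_simps)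
      moreover have "lam * f1 z ^ 2 \<le> 0"
        using \<open>\<not> lam > 0\<close> by (simp add: mult_nonpos_nonneg)
      ultimately show "\<exists>D. (?E has_real_derivative D) (at z) \<and> D \<le> 0" by blast
    qed
  qed
  have "(f \<longlongrightarrow> 1) at_bot"
    using tendsto_add_const_iff[of 1 "\<lambda>y. f y - 1" 0 at_bot]
      exp_decay_at_bot_imp_tendsto_zero[OF bot0] by simp
  then have "(?E \<longlongrightarrow> - 1/6) at_bot"
    using wave_energy_tendsto[of f 1 at_bot] exp_decay_at_bot_imp_tendsto_zero bot1 bot2 bot3
    by simp
  moreover have "(?E \<longlongrightarrow> 0) at_top"
    using wave_energy_tendsto[of f 0 at_top] exp_decay_at_top_imp_tendsto_zero top0 top1 top2 top3
    by simp
  ultimately have "0 \<le> (- 1/6 :: real)"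
    by (rule antimono_limit_at_top_le_limit_at_bot[OF E_antimono])
  then show False by simp
qed

end
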